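(* Consider the linear model $\mathbf{y}=\alpha\mathbf{1}_n+\mathbf{X}\boldsymbol{\beta}+\sigma\boldsymbol{\epsilon}$ and Stein's loss $L_S(\delta,\sigma^2)=\delta/\sigma^2-\log(\delta/\sigma^2)-1$. Let $\phi:[0,1]\to(0,\infty)$ be monotone nondecreasing and let $\delta_\phi=\phi(R^2)\,\mathrm{RSS}/(n-p-1)$. Suppose that, when $\boldsymbol{\epsilon}\sim N_n(\mathbf{0}_n,\mathbf{I}_n)$, $\delta_\phi$ improves on the unbiased estimator $\delta_U=\mathrm{RSS}/(n-p-1)$, i.e. $E[L_S(\delta_\phi,\sigma^2)]\le E[L_S(\delta_U,\sigma^2)]$ for all $(\alpha,\boldsymbol{\beta},\sigma^2)$. Then $\delta_\phi$ also improves on $\delta_U$ (in the same sense, for all $(\alpha,\boldsymbol{\beta},\sigma^2)$) whenever the distribution of $\boldsymbol{\epsilon}$ is any scale mixture of normals, i.e. $\boldsymbol{\epsilon}=\tau\mathbf{Z}$ with $\mathbf{Z}\sim N_n(\mathbf{0}_n,\mathbf{I}_n)$ independent of a positive random scalar $\tau$ satisfying $E[\tau^2]=1$.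
   Context: Here $\mathbf{y}\in\mathbb{R}^n$ is observed, $\alpha\in\mathbb{R}$ is an unknown intercept, $\mathbf{1}_n$ is the $n$-vector of ones, $\mathbf{X}=(\mathbf{x}_1,\dots,\mathbf{x}_p)$ is a known $n\times p$ design matrix whose columns are centered ($\mathbf{x}_i'\mathbf{1}_n=0$) and linearly independent (rank $p$), $n>p+1$, $\boldsymbol{\beta}\in\mathbb{R}^p$ is unknown, and $\sigma>0$ is unknown. With $\bar y$ the mean of the entries of $\mathbf{y}$, $\mathrm{RSS}=\|(\mathbf{I}-\mathbf{X}(\mathbf{X}'\mathbf{X})^{-1}\mathbf{X}')(\mathbf{y}-\bar y\mathbf{1}_n)\|^2$ and $R^2=\|\mathbf{X}(\mathbf{X}'\mathbf{X})^{-1}\mathbf{X}'(\mathbf{y}-\bar y\mathbf{1}_n)\|^2/\|\mathbf{y}-\bar y\mathbf{1}_n\|^2$. Equivalently, a scale mixture of normals has density $f(\boldsymbol{\epsilon}'\boldsymbol{\epsilon})$ with $f(t)=\int_0^\infty(2\pi\tau^2)^{-n/2}\exp(-t/(2\tau^2))\,g(\tau^2)\,d\tau^2$ for a mixing density $g$ of $\tau^2$ with mean $1$. *)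

theory Defs
  imports "HOL-Probability.Probability"
begin

text \<open>Vectors in R^n are rendered as real^'n (n = CARD('n)); the design matrix X is
  an n x p matrix real^'p^'n (p = CARD('p)).\<close>

definition ones :: "real^'n" where
  "ones = vec 1"

definition ybar :: "real^'n \<Rightarrow> real" where
  "ybar y = (\<Sum>i\<in>UNIV. y $ i) / real CARD('n)"

definition centered :: "real^'n \<Rightarrow> real^'n" where
  "centered y = y - ybar y *\<^sub>R ones"

definition hat :: "real^'p^'n \<Rightarrow> real^'n^'n" where
  "hat X = X ** matrix_inv (transpose X ** X) ** transpose X"

definition RSS :: "real^'p^'n \<Rightarrow> real^'n \<Rightarrow> real" where
  "RSS X y = (norm (centered y - hat X *v centered y))\<^sup>2"

definition Rsq :: "real^'p^'n \<Rightarrow> real^'n \<Rightarrow> real" where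
  "Rsq X y = (norm (hat X *v centered y))\<^sup>2 / (norm (centered y))\<^sup>2"

definition stein_loss :: "real \<Rightarrow> real \<Rightarrow> real" where
  "stein_loss d s2 = d / s2 - ln (d / s2) - 1"

definition delta_phi :: "(real \<Rightarrow> real) \<Rightarrow> real^'p^'n \<Rightarrow> real^'n \<Rightarrow> real" where
  "delta_phi \<phi> X y = \<phi> (Rsq X y) * RSS X y / (real CARD('n) - real CARD('p) - 1)"

definition delta_U :: "real^'p^'n \<Rightarrow> real^'n \<Rightarrow> real" where
  "delta_U X y = RSS X y / (real CARD('n) - real CARD('p) - 1)"

text \<open>Stein's loss is nonnegative,
  so the expectation is taken as a (possibly infinite) nonnegative integral.\<close>
definition risk :: "(real^'n) measure \<Rightarrow> (real^'n \<Rightarrow> real) \<Rightarrow> real^'p^'n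
    \<Rightarrow> real \<Rightarrow> real^'p \<Rightarrow> real \<Rightarrow> ennreal" where
  "risk P \<delta> X \<alpha> \<beta> \<sigma> =
     (\<integral>\<^sup>+ e. ennreal (stein_loss (\<delta> (\<alpha> *\<^sub>R ones + X *v \<beta> + \<sigma> *\<^sub>R e)) (\<sigma>\<^sup>2)) \<partial>P)"

definition std_normal_dens :: "real^'n \<Rightarrow> ennreal" where
  "std_normal_dens x = ennreal ((2 * pi) powr (- real CARD('n) / 2) * exp (- (norm x)\<^sup>2 / 2))"

definition std_normal_n :: "(real^'n) measure" where
  "std_normal_n = density lborel std_normal_dens"

end

theory Submission
  imports Defs
begin

text \<open>Conditionally on the mixing scale \<open>\<tau> = t\<close> the error is normal with scale \<open>\<sigma> t\<close>, so the
  risk at \<open>t\<close> is a normal risk, except that the loss is measured against \<open>\<sigma>\<^sup>2\<close> instead of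
  \<open>(\<sigma> t)\<^sup>2\<close>.  Stein's loss \<open>f(x) = x - ln x - 1\<close> satisfies \<open>f(t\<^sup>2 x) = f(x) + (t\<^sup>2 - 1) x - ln t\<^sup>2\<close>,
  so the difference of the risks of \<open>\<delta>\<^sub>\<phi>\<close> and \<open>\<delta>\<^sub>U\<close> at \<open>t\<close> is the normal risk difference at
  noise level \<open>\<sigma> t\<close>, which is \<open>\<le> 0\<close> by hypothesis, plus \<open>(t\<^sup>2 - 1)(a(1/(\<sigma> t)) - E \<delta>\<^sub>U)\<close>, where
  \<open>a(c)\<close> is the normal mean of \<open>\<delta>\<^sub>\<phi>\<close> at signal-to-noise ratio \<open>c\<close>.  Since \<open>\<phi>(R\<^sup>2) RSS\<close> grows
  when the mean moves away from the origin along \<open>X \<beta>\<close>, an Anderson-type symmetrisation shows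
  that \<open>a\<close> is nondecreasing on \<open>[0, \<infinity>)\<close>.  Hence \<open>a(1/(\<sigma> t))\<close> may be replaced by the constant
  \<open>a(1/\<sigma>)\<close>, and the remaining term vanishes on averaging because \<open>E \<tau>\<^sup>2 = 1\<close>.\<close>

text \<open>The lemmas below on the normal equations are stated with \<open>transpose X *v u\<close>, which these
  library simp rules would rewrite to \<open>u v* X\<close>.\<close>
declare transpose_matrix_vector[simp del] vector_transpose_matrix[simp del]

lemma ybar_add: "ybar (a + b) = ybar a + ybar b"
  by (simp add: ybar_def sum.distrib add_divide_distrib)

lemma ybar_scaleR: "ybar (c *\<^sub>R a) = c * ybar a"
  by (simp add: ybar_def sum_distrib_left)

lemma ybar_ones: "ybar (ones :: real^'n::finite) = 1"
  by (simp add: ybar_def ones_def)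

lemma centered_add: "centered (a + b) = centered a + centered b"
  by (simp add: centered_def ybar_add algebra_simps)

lemma centered_scaleR: "centered (c *\<^sub>R a) = c *\<^sub>R centered a"
  by (simp add: centered_def ybar_scaleR algebra_simps)

lemma centered_ones: "centered (ones :: real^'n::finite) = 0"
  by (simp add: centered_def ybar_ones)

lemma continuous_on_centered: "continuous_on UNIV (centered :: real^'n::finite \<Rightarrow> real^'n)"
  unfolding centered_def ybar_def by (intro continuous_intros) auto

locale regression_design =
  fixes X :: "real^'p^'n"
  assumes centered_cols: "\<forall>j. (\<Sum>i\<in>UNIV. X $ i $ j) = 0"
    and full_rank: "rank X = CARD('p)"
begin

lemma inner_matrix_vector_transpose: "(X *v w) \<bullet> u = w \<bullet> (transpose X *v u)"
  by (metis dot_lmul_matrix inner_commute transpose_matrix_vector)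

lemma gram_injective: "inj ((*v) (transpose X ** X))"
proof (rule injI)
  fix a b assume "(transpose X ** X) *v a = (transpose X ** X) *v b"
  then have "(transpose X ** X) *v (a - b) = 0"
    by (simp add: matrix_vector_mult_diff_distrib)
  then have "(X *v (a - b)) \<bullet> (X *v (a - b)) = 0"
    by (simp add: inner_matrix_vector_transpose matrix_vector_mul_assoc)
  then have "X *v a = X *v b"
    by (simp add: matrix_vector_mult_diff_distrib)
  then show "a = b"
    using full_rank full_rank_injective by (blast dest: injD)
qed

lemma gram_inverse:
  "(transpose X ** X) ** matrix_inv (transpose X ** X) = mat 1"
  "matrix_inv (transpose X ** X) ** (transpose X ** X) = mat 1"
proof -
  have "invertible (transpose X ** X)"
    using gram_injective invertible_left_inverse matrix_left_invertible_injective by blast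
  then have "\<exists>B. (transpose X ** X) ** B = mat 1 \<and> B ** (transpose X ** X) = mat 1"
    unfolding invertible_def .
  from someI_ex[OF this] show
    "(transpose X ** X) ** matrix_inv (transpose X ** X) = mat 1"
    "matrix_inv (transpose X ** X) ** (transpose X ** X) = mat 1"
    unfolding matrix_inv_def by auto
qed

lemma hat_apply: "hat X *v z = X *v (matrix_inv (transpose X ** X) *v (transpose X *v z))"
  by (simp only: hat_def matrix_vector_mul_assoc[symmetric])

lemma transpose_hat: "transpose X *v (hat X *v z) = transpose X *v z"
proof -
  have "transpose X *v (hat X *v z)
      = ((transpose X ** X) ** matrix_inv (transpose X ** X)) *v (transpose X *v z)"
    by (simp only: hat_apply matrix_vector_mul_assoc[symmetric])
  then show ?thesis by (simp add: gram_inverse)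
qed

lemma hat_range: "hat X *v (X *v w) = X *v w"
proof -
  have "hat X *v (X *v w) = X *v ((matrix_inv (transpose X ** X) ** (transpose X ** X)) *v w)"
    by (simp only: hat_apply matrix_vector_mul_assoc[symmetric])
  then show ?thesis by (simp add: gram_inverse)
qed

lemma hat_ones: "hat X *v ones = 0"
proof -
  have "transpose X *v ones = 0"
    using centered_cols by (simp add: vec_eq_iff matrix_vector_mult_def transpose_def ones_def)
  then show ?thesis by (simp add: hat_apply)
qed

lemma inner_range_hat: "(X *v w) \<bullet> (hat X *v v) = (X *v w) \<bullet> v"
  by (simp add: inner_matrix_vector_transpose transpose_hat)

lemma norm_hat_Pythagorean:
  "(norm c)\<^sup>2 = (norm (hat X *v c))\<^sup>2 + (norm (c - hat X *v c))\<^sup>2"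
proof -
  have "(hat X *v c) \<bullet> (c - hat X *v c) = 0"
    using inner_range_hat[of "matrix_inv (transpose X ** X) *v (transpose X *v c)" c]
    by (simp add: inner_diff_right hat_apply[symmetric])
  then have "(norm (hat X *v c + (c - hat X *v c)))\<^sup>2
      = (norm (hat X *v c))\<^sup>2 + (norm (c - hat X *v c))\<^sup>2"
    by (intro norm_add_Pythagorean) (simp add: orthogonal_def)
  then show ?thesis by simp
qed

lemma ybar_range: "ybar (X *v w) = 0"
proof -
  have "(\<Sum>i\<in>UNIV. (X *v w) $ i) = (\<Sum>j\<in>UNIV. w $ j * (\<Sum>i\<in>UNIV. X $ i $ j))"
    unfolding matrix_vector_mult_def by (simp add: sum_distrib_left mult.commute) (rule sum.swap)
  then show ?thesis using centered_cols by (simp add: ybar_def)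
qed

lemma centered_range: "centered (X *v w) = X *v w"
  by (simp add: centered_def ybar_range)

lemma hat_centered: "hat X *v centered z = hat X *v z"
  by (simp add: centered_def matrix_vector_mult_diff_distrib matrix_vector_mult_scaleR hat_ones)

lemma RSS_alt: "RSS X v = (norm (centered v - hat X *v v))\<^sup>2"
  by (simp add: RSS_def hat_centered)

lemma RSS_nonneg: "0 \<le> RSS X v"
  by (simp add: RSS_def)

lemma Rsq_alt: "Rsq X v = (norm (hat X *v v))\<^sup>2 / ((norm (hat X *v v))\<^sup>2 + RSS X v)"
  using norm_hat_Pythagorean[of "centered v"] by (simp add: Rsq_def RSS_def hat_centered)

lemma Rsq_bounds: "Rsq X v \<in> {0..1}"
proof -
  have "0 \<le> (norm (hat X *v v))\<^sup>2" "0 \<le> RSS X v"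
    by (simp_all add: RSS_nonneg)
  moreover have "q / (q + r) \<in> {0..1}" if "0 \<le> q" "0 \<le> r" for q r :: real
    using that by (cases "q + r = 0") (auto simp: divide_le_eq_1)
  ultimately show ?thesis
    unfolding Rsq_alt by blast
qed

lemma Rsq_mono:
  assumes "RSS X u = RSS X v" and "0 < RSS X v"
    and "(norm (hat X *v v))\<^sup>2 \<le> (norm (hat X *v u))\<^sup>2"
  shows "Rsq X v \<le> Rsq X u"
proof -
  have "q / (q + r) \<le> q' / (q' + r)" if "0 < r" "0 \<le> q" "q \<le> q'" for q q' r :: real
    using that by (simp add: divide_simps) (simp add: algebra_simps mult_right_mono)
  then show ?thesis
    using assms by (simp add: Rsq_alt)
qed

lemma RSS_add_range: "RSS X (v + X *v w) = RSS X v"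
  by (simp add: RSS_alt centered_add centered_range matrix_vector_right_distrib hat_range)

lemma RSS_scaleR: "RSS X (c *\<^sub>R v) = c\<^sup>2 * RSS X v"
proof -
  have "centered (c *\<^sub>R v) - hat X *v (c *\<^sub>R v) = c *\<^sub>R (centered v - hat X *v v)"
    by (simp add: centered_scaleR matrix_vector_mult_scaleR scaleR_diff_right)
  then show ?thesis by (simp add: RSS_alt power_mult_distrib)
qed

lemma RSS_add_ones: "RSS X (a *\<^sub>R ones + v) = RSS X v"
  by (simp add: RSS_alt centered_add centered_scaleR centered_ones
      matrix_vector_right_distrib matrix_vector_mult_scaleR hat_ones)

lemma Rsq_add_ones: "Rsq X (a *\<^sub>R ones + v) = Rsq X v"
  by (simp add: Rsq_alt RSS_add_ones matrix_vector_right_distrib matrix_vector_mult_scaleR hat_ones)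

lemma Rsq_scaleR: "c \<noteq> 0 \<Longrightarrow> Rsq X (c *\<^sub>R v) = Rsq X v"
  by (simp add: Rsq_alt RSS_scaleR matrix_vector_mult_scaleR power_mult_distrib
      distrib_left[symmetric])

lemma model_rescale:
  "s \<noteq> 0 \<Longrightarrow> a *\<^sub>R ones + X *v b + s *\<^sub>R z = a *\<^sub>R ones + s *\<^sub>R ((1/s) *\<^sub>R (X *v b) + z)"
  by (simp add: scaleR_add_right)

lemma RSS_model:
  assumes "s \<noteq> 0"
  shows "RSS X (a *\<^sub>R ones + X *v b + s *\<^sub>R z) = s\<^sup>2 * RSS X z"
proof -
  have "RSS X ((1/s) *\<^sub>R (X *v b) + z) = RSS X z"
    using RSS_add_range[of z "(1/s) *\<^sub>R b"] by (simp add: matrix_vector_mult_scaleR add.commute)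
  then show ?thesis
    by (simp only: model_rescale[OF assms] RSS_add_ones RSS_scaleR)
qed

lemma Rsq_model:
  "s \<noteq> 0 \<Longrightarrow> Rsq X (a *\<^sub>R ones + X *v b + s *\<^sub>R z) = Rsq X ((1/s) *\<^sub>R (X *v b) + z)"
  by (simp add: model_rescale Rsq_add_ones Rsq_scaleR)

lemma continuous_on_RSS: "continuous_on UNIV (RSS X)"
  unfolding RSS_alt[abs_def] by (intro continuous_intros continuous_on_centered)

lemma borel_measurable_RSS[measurable]: "RSS X \<in> borel_measurable borel"
  using continuous_on_RSS by (rule borel_measurable_continuous_onI)

lemma borel_measurable_Rsq[measurable]: "Rsq X \<in> borel_measurable borel"
proof -
  have "(\<lambda>v. (norm (hat X *v v))\<^sup>2) \<in> borel_measurable borel"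
    by (intro borel_measurable_continuous_onI continuous_intros)
  then show ?thesis unfolding Rsq_alt[abs_def] by measurable
qed

lemma dim_RSS_zero: "dim {z. RSS X z = 0} \<le> CARD('p) + 1"
proof -
  let ?R = "range ((*v) X)"
  have zero_set: "{z. RSS X z = 0} \<subseteq> span (insert ones ?R)"
  proof
    fix z assume "z \<in> {z. RSS X z = 0}"
    then have "centered z = hat X *v z"
      by (simp add: RSS_alt)
    then have "z = hat X *v z + ybar z *\<^sub>R ones"
      by (simp add: centered_def algebra_simps)
    also have "\<dots> \<in> span (insert ones ?R)"
      unfolding hat_apply by (intro span_add span_scale span_base) auto
    finally show "z \<in> span (insert ones ?R)" .
  qed
  have "dim {z. RSS X z = 0} \<le> dim (insert ones ?R)"
    using dim_subset[OF zero_set] by simp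
  also have "\<dots> \<le> dim ?R + 1"
    by (simp add: dim_insert)
  also have "dim ?R = CARD('p)"
    using full_rank rank_dim_range by metis
  finally show ?thesis .
qed

lemma AE_RSS_pos:
  assumes "CARD('n) > CARD('p) + 1"
  shows "AE z in lborel. 0 < RSS X z"
proof -
  have "negligible {z. RSS X z = 0}"
    using dim_RSS_zero assms by (intro negligible_lowdim) simp
  moreover have "{z. RSS X z = 0} \<in> sets lborel"
    by measurable
  ultimately have "{z. RSS X z = 0} \<in> null_sets lborel"
    using negligible_iff_null_sets null_sets_completion_iff by blast
  then show ?thesis
    by (rule AE_I') (auto simp: less_le RSS_nonneg)
qed

end

lemma nn_integral_lborel_affine:
  fixes t :: "'a::euclidean_space"
  assumes [measurable]: "f \<in> borel_measurable borel" and "c \<noteq> 0"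
  shows "(\<integral>\<^sup>+x. f x \<partial>lborel) = ennreal (\<bar>c\<bar> ^ DIM('a)) * (\<integral>\<^sup>+x. f (t + c *\<^sub>R x) \<partial>lborel)"
  by (subst lborel_affine[OF \<open>c \<noteq> 0\<close>, of t])
     (simp add: nn_integral_density nn_integral_distr nn_integral_cmult)

lemma ennreal_rearrangement:
  fixes a b x y :: real
  assumes "0 \<le> a" "0 \<le> b" "0 \<le> x" "0 \<le> y" "0 \<le> (a - b) * (x - y)"
  shows "ennreal a * ennreal y + ennreal b * ennreal x \<le> ennreal a * ennreal x + ennreal b * ennreal y"
proof -
  have "a * y + b * x \<le> a * x + b * y"
    using assms(5) by (simp add: algebra_simps)
  then show ?thesis
    using assms by (simp add: ennreal_mult[symmetric] ennreal_plus[symmetric] del: ennreal_plus)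
qed

text \<open>Reflection through \<open>((c\<^sub>1 + c\<^sub>2)/2) \<mu>\<close> swaps the two shifted
  densities \<open>d\<^sub>1, d\<^sub>2\<close>, so the claim reduces to the rearrangement inequality
  \<open>d\<^sub>1 g(v) + d\<^sub>2 g(w - v) \<le> d\<^sub>1 g(w - v) + d\<^sub>2 g(v)\<close>, which holds because \<open>d\<^sub>2 \<le> d\<^sub>1\<close> exactly on
  the half-space where \<open>g(v) \<le> g(w - v)\<close> is guaranteed.\<close>

lemma nn_integral_radial_shift_mono:
  fixes \<mu> :: "'a::euclidean_space" and f :: "real \<Rightarrow> real" and g :: "'a \<Rightarrow> real"
  assumes f_meas[measurable]: "f \<in> borel_measurable borel" and f_nonneg: "\<And>r. 0 \<le> f r"
    and f_antimono: "\<And>r s. 0 \<le> r \<Longrightarrow> r \<le> s \<Longrightarrow> f s \<le> f r"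
    and g_meas[measurable]: "g \<in> borel_measurable borel" and g_nonneg: "\<And>v. 0 \<le> g v"
    and g_reflect: "\<And>v l. 0 \<le> l \<Longrightarrow> \<mu> \<bullet> v \<le> \<mu> \<bullet> (l *\<^sub>R \<mu> - v) \<Longrightarrow> g v \<le> g (l *\<^sub>R \<mu> - v)"
    and c: "0 \<le> c\<^sub>1" "c\<^sub>1 \<le> c\<^sub>2"
  shows "(\<integral>\<^sup>+z. ennreal (f (norm z)) * ennreal (g (c\<^sub>1 *\<^sub>R \<mu> + z)) \<partial>lborel)
       \<le> (\<integral>\<^sup>+z. ennreal (f (norm z)) * ennreal (g (c\<^sub>2 *\<^sub>R \<mu> + z)) \<partial>lborel)"
proof -
  define w where "w = (c\<^sub>1 + c\<^sub>2) *\<^sub>R \<mu>"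
  define d where "d c v = ennreal (f (norm (v - c *\<^sub>R \<mu>)))" for c v
  define h where "h v = ennreal (g v)" for v
  have [measurable]: "d c \<in> borel_measurable borel" "h \<in> borel_measurable borel" for c
    unfolding d_def h_def by measurable
  have shift: "(\<integral>\<^sup>+z. ennreal (f (norm z)) * ennreal (g (c *\<^sub>R \<mu> + z)) \<partial>lborel)
      = (\<integral>\<^sup>+v. d c v * h v \<partial>lborel)" for c
    by (subst nn_integral_lborel_affine[of _ 1 "c *\<^sub>R \<mu>"]) (simp_all add: d_def h_def)
  have reflect: "(\<integral>\<^sup>+v. d c v * h (w - v) \<partial>lborel) = (\<integral>\<^sup>+v. d (c\<^sub>1 + c\<^sub>2 - c) v * h v \<partial>lborel)" for c
  proof -
    have "norm (w - v - c *\<^sub>R \<mu>) = norm (v - (c\<^sub>1 + c\<^sub>2 - c) *\<^sub>R \<mu>)" for v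
    proof -
      have "w - v - c *\<^sub>R \<mu> = - (v - (c\<^sub>1 + c\<^sub>2 - c) *\<^sub>R \<mu>)"
        by (simp add: w_def algebra_simps)
      then show ?thesis
        by (metis norm_minus_cancel)
    qed
    then show ?thesis
      by (subst nn_integral_lborel_affine[of _ "-1" w]) (simp_all add: d_def)
  qed
  have pointwise: "d c\<^sub>1 v * h v + d c\<^sub>2 v * h (w - v) \<le> d c\<^sub>1 v * h (w - v) + d c\<^sub>2 v * h v" for v
  proof -
    have dist_diff: "(norm (v - c\<^sub>2 *\<^sub>R \<mu>))\<^sup>2 - (norm (v - c\<^sub>1 *\<^sub>R \<mu>))\<^sup>2
        = (c\<^sub>2 - c\<^sub>1) * (\<mu> \<bullet> (w - v) - \<mu> \<bullet> v)"
      by (simp add: w_def power2_norm_eq_inner inner_commute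
          algebra_simps)
    have "0 \<le> (f (norm (v - c\<^sub>1 *\<^sub>R \<mu>)) - f (norm (v - c\<^sub>2 *\<^sub>R \<mu>))) * (g (w - v) - g v)"
    proof (cases "\<mu> \<bullet> v \<le> \<mu> \<bullet> (w - v)")
      case True
      then have "0 \<le> (c\<^sub>2 - c\<^sub>1) * (\<mu> \<bullet> (w - v) - \<mu> \<bullet> v)"
        using c by simp
      then have "norm (v - c\<^sub>1 *\<^sub>R \<mu>) \<le> norm (v - c\<^sub>2 *\<^sub>R \<mu>)"
        using dist_diff by (intro power2_le_imp_le[OF _ norm_ge_zero]) linarith
      then have "f (norm (v - c\<^sub>2 *\<^sub>R \<mu>)) \<le> f (norm (v - c\<^sub>1 *\<^sub>R \<mu>))"
        by (intro f_antimono) simp_all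
      moreover have "g v \<le> g (w - v)"
        using True c unfolding w_def by (intro g_reflect) simp_all
      ultimately show ?thesis
        by (intro mult_nonneg_nonneg) simp_all
    next
      case False
      then have "(c\<^sub>2 - c\<^sub>1) * (\<mu> \<bullet> (w - v) - \<mu> \<bullet> v) \<le> 0"
        using c by (simp add: mult_nonneg_nonpos)
      then have "norm (v - c\<^sub>2 *\<^sub>R \<mu>) \<le> norm (v - c\<^sub>1 *\<^sub>R \<mu>)"
        using dist_diff by (intro power2_le_imp_le[OF _ norm_ge_zero]) linarith
      then have "f (norm (v - c\<^sub>1 *\<^sub>R \<mu>)) \<le> f (norm (v - c\<^sub>2 *\<^sub>R \<mu>))"
        by (intro f_antimono) simp_all
      moreover have "g (w - v) \<le> g v"
        using False c g_reflect[of "c\<^sub>1 + c\<^sub>2" "w - v"] unfolding w_def by simp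
      ultimately show ?thesis
        by (intro mult_nonpos_nonpos) simp_all
    qed
    then show ?thesis
      unfolding d_def h_def by (intro ennreal_rearrangement f_nonneg g_nonneg)
  qed
  define I where "I c = (\<integral>\<^sup>+v. d c v * h v \<partial>lborel)" for c
  have "I c\<^sub>1 + I c\<^sub>1 = (\<integral>\<^sup>+v. d c\<^sub>1 v * h v + d c\<^sub>2 v * h (w - v) \<partial>lborel)"
    by (simp add: I_def reflect nn_integral_add)
  also have "\<dots> \<le> (\<integral>\<^sup>+v. d c\<^sub>1 v * h (w - v) + d c\<^sub>2 v * h v \<partial>lborel)"
    by (intro nn_integral_mono pointwise)
  also have "\<dots> = I c\<^sub>2 + I c\<^sub>2"
    by (simp add: I_def reflect nn_integral_add add.commute)
  finally have "I c\<^sub>1 \<le> I c\<^sub>2"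
    by (simp add: mult_2[symmetric] ennreal_mult_le_mult_iff)
  then show ?thesis
    by (simp add: shift I_def)
qed

definition stein_fun :: "real \<Rightarrow> real" where
  "stein_fun x = x - ln x - 1"

lemma stein_loss_eq_stein_fun: "stein_loss d s2 = stein_fun (d / s2)"
  by (simp add: stein_loss_def stein_fun_def)

lemma stein_fun_nonneg: "0 < x \<Longrightarrow> 0 \<le> stein_fun x"
  using ln_le_minus_one[of x] by (simp add: stein_fun_def)

lemma half_le_stein_fun: "0 < x \<Longrightarrow> x / 2 \<le> stein_fun x + ln 2"
  using ln_le_minus_one[of "x / 2"] by (simp add: stein_fun_def ln_div)

context prob_space
begin

lemma integrable_of_nn_integral_stein_fun:
  assumes [measurable]: "Y \<in> borel_measurable M" and Y_pos: "AE x in M. 0 < Y x" and "0 < r"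
    and finite: "(\<integral>\<^sup>+x. ennreal (stein_fun (r * Y x)) \<partial>M) \<noteq> \<infinity>"
  shows "integrable M Y" and "integrable M (\<lambda>x. ln (Y x))"
proof -
  have [measurable]: "(\<lambda>x. stein_fun (r * Y x)) \<in> borel_measurable M"
    unfolding stein_fun_def by measurable
  have "AE x in M. 0 \<le> stein_fun (r * Y x)"
    using Y_pos by eventually_elim (simp add: stein_fun_nonneg \<open>0 < r\<close>)
  then have loss_int: "integrable M (\<lambda>x. stein_fun (r * Y x))"
    using finite by (intro integrableI_nonneg) (auto simp: top.not_eq_extremum)
  show Y_int: "integrable M Y"
  proof (rule Bochner_Integration.integrable_bound)
    show "integrable M (\<lambda>x. (2 / r) * (stein_fun (r * Y x) + ln 2))"
      using loss_int by (intro integrable_mult_right Bochner_Integration.integrable_add) auto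
    show "AE x in M. norm (Y x) \<le> norm ((2 / r) * (stein_fun (r * Y x) + ln 2))"
      using Y_pos
    proof eventually_elim
      case (elim x)
      then have "r * Y x / 2 \<le> stein_fun (r * Y x) + ln 2"
        using \<open>0 < r\<close> by (intro half_le_stein_fun) simp
      then show ?case
        using elim \<open>0 < r\<close> stein_fun_nonneg[of "r * Y x"] by (simp add: field_simps)
    qed
  qed measurable
  show "integrable M (\<lambda>x. ln (Y x))"
  proof (rule integrable_cong_AE_imp)
    show "integrable M (\<lambda>x. r * Y x - ln r - 1 - stein_fun (r * Y x))"
      using loss_int Y_int by (intro Bochner_Integration.integrable_diff integrable_mult_right) auto
    show "AE x in M. r * Y x - ln r - 1 - stein_fun (r * Y x) = ln (Y x)"
      using Y_pos by eventually_elim (use \<open>0 < r\<close> in \<open>simp add: stein_fun_def ln_mult\<close>)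
  qed measurable
qed

lemma nn_integral_stein_fun:
  assumes [measurable]: "Y \<in> borel_measurable M" and Y_pos: "AE x in M. 0 < Y x"
    and Y_int: "integrable M Y" and lnY_int: "integrable M (\<lambda>x. ln (Y x))" and "0 < r"
  shows "(\<integral>\<^sup>+x. ennreal (stein_fun (r * Y x)) \<partial>M)
      = ennreal (r * expectation Y - ln r - expectation (\<lambda>x. ln (Y x)) - 1)"
    and "0 \<le> r * expectation Y - ln r - expectation (\<lambda>x. ln (Y x)) - 1"
proof -
  define L where "L x = r * Y x - ln r - ln (Y x) - 1" for x
  have L_int: "integrable M L"
    unfolding L_def using Y_int lnY_int by auto
  have L_eq: "AE x in M. stein_fun (r * Y x) = L x"
    using Y_pos by eventually_elim (use \<open>0 < r\<close> in \<open>simp add: stein_fun_def L_def ln_mult\<close>)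
  have L_nonneg: "AE x in M. 0 \<le> L x"
    using L_eq Y_pos by eventually_elim (metis stein_fun_nonneg mult_pos_pos \<open>0 < r\<close>)
  have L_expectation: "expectation L = r * expectation Y - ln r - expectation (\<lambda>x. ln (Y x)) - 1"
    unfolding L_def using Y_int lnY_int by (simp add: prob_space)
  show "(\<integral>\<^sup>+x. ennreal (stein_fun (r * Y x)) \<partial>M)
      = ennreal (r * expectation Y - ln r - expectation (\<lambda>x. ln (Y x)) - 1)"
  proof -
    have "(\<integral>\<^sup>+x. ennreal (stein_fun (r * Y x)) \<partial>M) = (\<integral>\<^sup>+x. ennreal (L x) \<partial>M)"
      using L_eq by (intro nn_integral_cong_AE) auto
    also have "\<dots> = ennreal (expectation L)"
      using L_int L_nonneg by (rule nn_integral_eq_integral)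
    finally show ?thesis
      by (simp add: L_expectation)
  qed
  show "0 \<le> r * expectation Y - ln r - expectation (\<lambda>x. ln (Y x)) - 1"
    using integral_nonneg_AE[OF L_nonneg] L_expectation by simp
qed

lemma integrable_bounded_mult:
  fixes Y Q :: "'a \<Rightarrow> real"
  assumes [measurable]: "Y \<in> borel_measurable M" "Q \<in> borel_measurable M"
    and Y_pos: "AE x in M. 0 < Y x" and Y_int: "integrable M Y"
    and lnY_int: "integrable M (\<lambda>x. ln (Y x))"
    and Q_bounds: "\<And>x. q\<^sub>0 \<le> Q x" "\<And>x. Q x \<le> q\<^sub>1" and "0 < q\<^sub>0"
  shows "integrable M (\<lambda>x. Q x * Y x)" and "integrable M (\<lambda>x. ln (Q x))"
    and "integrable M (\<lambda>x. ln (Q x * Y x))"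
proof -
  have Q_pos: "0 < Q x" for x
    using Q_bounds(1)[of x] \<open>0 < q\<^sub>0\<close> by linarith
  show "integrable M (\<lambda>x. Q x * Y x)"
  proof (rule Bochner_Integration.integrable_bound[OF integrable_mult_right[OF Y_int, of q\<^sub>1]])
    show "AE x in M. norm (Q x * Y x) \<le> norm (q\<^sub>1 * Y x)"
    proof (rule AE_mp[OF Y_pos], intro AE_I2 impI)
      fix x assume "0 < Y x"
      then show "norm (Q x * Y x) \<le> norm (q\<^sub>1 * Y x)"
        using Q_bounds(2)[of x] Q_pos[of x] by (simp add: abs_mult mult_right_mono)
    qed
  qed measurable
  show lnQ_int: "integrable M (\<lambda>x. ln (Q x))"
  proof (rule integrable_const_bound[where B = "\<bar>ln q\<^sub>0\<bar> + \<bar>ln q\<^sub>1\<bar>"])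
    show "AE x in M. norm (ln (Q x)) \<le> \<bar>ln q\<^sub>0\<bar> + \<bar>ln q\<^sub>1\<bar>"
    proof (rule AE_I2)
      fix x
      have "ln q\<^sub>0 \<le> ln (Q x)" "ln (Q x) \<le> ln q\<^sub>1"
        using Q_bounds[of x] \<open>0 < q\<^sub>0\<close> Q_pos[of x] by auto
      then show "norm (ln (Q x)) \<le> \<bar>ln q\<^sub>0\<bar> + \<bar>ln q\<^sub>1\<bar>"
        by auto
    qed
  qed measurable
  show "integrable M (\<lambda>x. ln (Q x * Y x))"
  proof (rule integrable_cong_AE_imp)
    show "integrable M (\<lambda>x. ln (Q x) + ln (Y x))"
      using lnQ_int lnY_int by auto
    show "AE x in M. ln (Q x) + ln (Y x) = ln (Q x * Y x)"
    proof (rule AE_mp[OF Y_pos], intro AE_I2 impI)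
      fix x assume "0 < Y x"
      then show "ln (Q x) + ln (Y x) = ln (Q x * Y x)"
        using Q_pos[of x] by (simp add: ln_mult)
    qed
  qed measurable
qed

lemma nn_integral_stein_fun_bounded_mult:
  fixes Y Q :: "'a \<Rightarrow> real"
  assumes [measurable]: "Y \<in> borel_measurable M" "Q \<in> borel_measurable M"
    and Y_pos: "AE x in M. 0 < Y x" and Y_int: "integrable M Y"
    and lnY_int: "integrable M (\<lambda>x. ln (Y x))"
    and Q_bounds: "\<And>x. q\<^sub>0 \<le> Q x" "\<And>x. Q x \<le> q\<^sub>1" and "0 < q\<^sub>0" and "0 < r"
  shows "(\<integral>\<^sup>+x. ennreal (stein_fun (r * (Q x * Y x))) \<partial>M) = ennreal (r * expectation (\<lambda>x. Q x * Y x)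
      - ln r - expectation (\<lambda>x. ln (Q x)) - expectation (\<lambda>x. ln (Y x)) - 1)"
    and "0 \<le> r * expectation (\<lambda>x. Q x * Y x)
      - ln r - expectation (\<lambda>x. ln (Q x)) - expectation (\<lambda>x. ln (Y x)) - 1"
proof -
  note QY_int = integrable_bounded_mult[OF assms(1-8)]
  have QY_pos: "AE x in M. 0 < Q x * Y x"
    using Y_pos by eventually_elim (metis Q_bounds(1) \<open>0 < q\<^sub>0\<close> order_less_le_trans mult_pos_pos)
  have "AE x in M. ln (Q x * Y x) = ln (Q x) + ln (Y x)"
    using QY_pos Y_pos by eventually_elim (auto simp: ln_mult)
  then have "expectation (\<lambda>x. ln (Q x * Y x)) = expectation (\<lambda>x. ln (Q x) + ln (Y x))"
    by (intro integral_cong_AE) auto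
  also have "\<dots> = expectation (\<lambda>x. ln (Q x)) + expectation (\<lambda>x. ln (Y x))"
    using QY_int(2) lnY_int by simp
  finally show "(\<integral>\<^sup>+x. ennreal (stein_fun (r * (Q x * Y x))) \<partial>M) = ennreal (r * expectation (\<lambda>x. Q x * Y x)
      - ln r - expectation (\<lambda>x. ln (Q x)) - expectation (\<lambda>x. ln (Y x)) - 1)"
    and "0 \<le> r * expectation (\<lambda>x. Q x * Y x)
      - ln r - expectation (\<lambda>x. ln (Q x)) - expectation (\<lambda>x. ln (Y x)) - 1"
    using nn_integral_stein_fun[OF _ QY_pos QY_int(1) QY_int(3) \<open>0 < r\<close>] by (simp_all add: diff_diff_eq)
qed

lemma ex_finite_of_nn_integral_finite:
  assumes "(\<integral>\<^sup>+x. f x \<partial>M) \<noteq> \<infinity>" and "AE x in M. P x"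
  shows "\<exists>x. P x \<and> f x \<noteq> \<infinity>"
proof (rule ccontr)
  assume "\<nexists>x. P x \<and> f x \<noteq> \<infinity>"
  then have "AE x in M. f x = \<infinity>"
    using assms(2) by (auto elim!: AE_mp)
  then have "(\<integral>\<^sup>+x. f x \<partial>M) = \<infinity>"
    by (simp add: nn_integral_cong_AE emeasure_space_1)
  with assms(1) show False ..
qed

lemma nn_integral_le_up_to_mean_zero:
  assumes [measurable]: "U \<in> borel_measurable M" and h_int: "integrable M h"
    and h_mean: "expectation h = 0" and U_nonneg: "AE x in M. 0 \<le> U x"
    and bound: "AE x in M. \<Phi> x \<le> ennreal (U x + a * h x) \<and> 0 \<le> U x + a * h x"
  shows "(\<integral>\<^sup>+x. \<Phi> x \<partial>M) \<le> (\<integral>\<^sup>+x. ennreal (U x) \<partial>M)"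
proof (cases "(\<integral>\<^sup>+x. ennreal (U x) \<partial>M) = \<infinity>")
  case False
  then have U_int: "integrable M U"
    using U_nonneg by (intro integrableI_nonneg) (auto simp: top.not_eq_extremum)
  have "(\<integral>\<^sup>+x. \<Phi> x \<partial>M) \<le> (\<integral>\<^sup>+x. ennreal (U x + a * h x) \<partial>M)"
    using bound by (intro nn_integral_mono_AE) auto
  also have "\<dots> = ennreal (expectation (\<lambda>x. U x + a * h x))"
    using U_int h_int bound by (intro nn_integral_eq_integral) auto
  also have "expectation (\<lambda>x. U x + a * h x) = expectation U"
    using U_int h_int h_mean by simp
  also have "ennreal (expectation U) = (\<integral>\<^sup>+x. ennreal (U x) \<partial>M)"
    using U_int U_nonneg by (intro nn_integral_eq_integral[symmetric])
  finally show ?thesis .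
qed simp

end

lemma mixture_gap_bound:
  fixes a b :: "real \<Rightarrow> real"
  assumes a_mono: "\<And>c\<^sub>1 c\<^sub>2. 0 \<le> c\<^sub>1 \<Longrightarrow> c\<^sub>1 \<le> c\<^sub>2 \<Longrightarrow> a c\<^sub>1 \<le> a c\<^sub>2"
    and gap: "\<And>c. 0 < c \<Longrightarrow> a c - w \<le> b c" and "0 < \<sigma>" "0 < t"
  shows "t\<^sup>2 * a (1 / (\<sigma> * t)) - b (1 / (\<sigma> * t)) \<le> t\<^sup>2 * w + (t\<^sup>2 - 1) * (a (1 / \<sigma>) - w)"
proof -
  let ?c = "1 / (\<sigma> * t)"
  have "(t\<^sup>2 - 1) * (a ?c - a (1 / \<sigma>)) \<le> 0"
  proof (cases "1 \<le> t")
    case True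
    then have "a ?c \<le> a (1 / \<sigma>)"
      using assms by (intro a_mono) (simp_all add: divide_simps)
    then show ?thesis
      using True by (simp add: mult_nonneg_nonpos one_le_power)
  next
    case False
    then have "a (1 / \<sigma>) \<le> a ?c"
      using assms by (intro a_mono) (simp_all add: divide_simps)
    then show ?thesis
      using False \<open>0 < t\<close> by (simp add: mult_nonpos_nonneg power_le_one)
  qed
  moreover have "a ?c - w \<le> b ?c"
    using gap assms by simp
  ultimately show ?thesis
    by (simp add: algebra_simps)
qed

text \<open>In the application \<open>N\<close> is the standard normal law, \<open>W\<close> is \<open>\<delta>\<^sub>U\<close> of the noise and
  \<open>P c\<close> is the factor \<open>\<phi>(R\<^sup>2)\<close> at signal-to-noise ratio \<open>c\<close>, so that \<open>P c * W\<close> is \<open>\<delta>\<^sub>\<phi>\<close>;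
  \<open>T\<close> is the law of the mixing scale.\<close>

lemma stein_risk_scale_mixture_le:
  fixes N :: "'b measure" and T :: "real measure" and W :: "'b \<Rightarrow> real"
    and P :: "real \<Rightarrow> 'b \<Rightarrow> real" and \<Phi> \<Psi> :: "real \<Rightarrow> 'b \<Rightarrow> ennreal"
  assumes N: "prob_space N" and T: "prob_space T" and T_sets: "sets T = sets borel"
    and W_meas[measurable]: "W \<in> borel_measurable N" and W_pos: "AE z in N. 0 < W z"
    and P_meas[measurable]: "\<And>c. P c \<in> borel_measurable N"
    and P_bounds: "\<And>c z. p\<^sub>0 \<le> P c z" "\<And>c z. P c z \<le> p\<^sub>1" and "0 < p\<^sub>0"
    and improves: "\<And>c. 0 < c \<Longrightarrow> (\<integral>\<^sup>+z. ennreal (stein_fun (P c z * W z)) \<partial>N)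
        \<le> (\<integral>\<^sup>+z. ennreal (stein_fun (W z)) \<partial>N)"
    and P_mono: "\<And>c\<^sub>1 c\<^sub>2. 0 \<le> c\<^sub>1 \<Longrightarrow> c\<^sub>1 \<le> c\<^sub>2 \<Longrightarrow> (\<integral>\<^sup>+z. ennreal (P c\<^sub>1 z * W z) \<partial>N)
        \<le> (\<integral>\<^sup>+z. ennreal (P c\<^sub>2 z * W z) \<partial>N)"
    and T_pos: "AE t in T. 0 < t"
    and T_sq: "integrable T (\<lambda>t. t\<^sup>2)" "(\<integral>t. t\<^sup>2 \<partial>T) = 1"
    and "0 < \<sigma>"
    and \<Phi>: "\<And>t z. 0 < t \<Longrightarrow> \<Phi> t z = ennreal (stein_fun (t\<^sup>2 * (P (1 / (\<sigma> * t)) z * W z)))"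
    and \<Psi>: "\<And>t z. 0 < t \<Longrightarrow> \<Psi> t z = ennreal (stein_fun (t\<^sup>2 * W z))"
  shows "(\<integral>\<^sup>+t. \<integral>\<^sup>+z. \<Phi> t z \<partial>N \<partial>T) \<le> (\<integral>\<^sup>+t. \<integral>\<^sup>+z. \<Psi> t z \<partial>N \<partial>T)"
proof (cases "(\<integral>\<^sup>+t. \<integral>\<^sup>+z. \<Psi> t z \<partial>N \<partial>T) = \<infinity>")
  case False
  interpret N: prob_space N by fact
  interpret T: prob_space T by fact
  obtain t\<^sub>0 where "0 < t\<^sub>0" "(\<integral>\<^sup>+z. \<Psi> t\<^sub>0 z \<partial>N) \<noteq> \<infinity>"
    using T.ex_finite_of_nn_integral_finite[OF False T_pos] by blast
  then have W_int: "integrable N W" and lnW_int: "integrable N (\<lambda>z. ln (W z))"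
    using N.integrable_of_nn_integral_stein_fun[OF W_meas W_pos, of "t\<^sub>0\<^sup>2"] \<Psi> by simp_all
  define a where "a c = (\<integral>z. P c z * W z \<partial>N)" for c
  define b where "b c = (\<integral>z. ln (P c z) \<partial>N)" for c
  define EW where "EW = (\<integral>z. W z \<partial>N)"
  define EL where "EL = (\<integral>z. ln (W z) \<partial>N)"
  define U where "U r = r * EW - ln r - EL - 1" for r
  note risk_P = N.nn_integral_stein_fun_bounded_mult[OF W_meas P_meas W_pos W_int lnW_int
      P_bounds \<open>0 < p\<^sub>0\<close>, folded a_def b_def EL_def]
  have risk_W: "(\<integral>\<^sup>+z. ennreal (stein_fun (r * W z)) \<partial>N) = ennreal (U r)" "0 \<le> U r"
    if "0 < r" for r
    using N.nn_integral_stein_fun[OF W_meas W_pos W_int lnW_int that] by (simp_all add: U_def EW_def EL_def)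
  have gap: "a c - EW \<le> b c" if "0 < c" for c
    using improves[OF that] risk_P[of 1 c] risk_W[of 1] by (simp add: U_def)
  have a_mono: "a c\<^sub>1 \<le> a c\<^sub>2" if "0 \<le> c\<^sub>1" "c\<^sub>1 \<le> c\<^sub>2" for c\<^sub>1 c\<^sub>2
  proof -
    have "AE z in N. 0 \<le> P c z * W z" for c
      using W_pos by eventually_elim (metis P_bounds(1) \<open>0 < p\<^sub>0\<close> order.trans less_imp_le mult_nonneg_nonneg)
    then have "(\<integral>\<^sup>+z. ennreal (P c z * W z) \<partial>N) = ennreal (a c)" "0 \<le> a c" for c
      using N.integrable_bounded_mult(1)[OF W_meas P_meas W_pos W_int lnW_int P_bounds \<open>0 < p\<^sub>0\<close>]
      by (auto simp: a_def nn_integral_eq_integral integral_nonneg_AE)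
    then show ?thesis
      using P_mono[OF that] by simp
  qed
  have [measurable]: "U \<in> borel_measurable borel"
    unfolding U_def by measurable
  have "(\<integral>\<^sup>+t. \<integral>\<^sup>+z. \<Phi> t z \<partial>N \<partial>T) \<le> (\<integral>\<^sup>+t. ennreal (U (t\<^sup>2)) \<partial>T)"
  proof (rule T.nn_integral_le_up_to_mean_zero[where h = "\<lambda>t. t\<^sup>2 - 1"])
    show "AE t in T. 0 \<le> U (t\<^sup>2)"
      using T_pos by eventually_elim (simp add: risk_W)
    show "AE t in T. (\<integral>\<^sup>+z. \<Phi> t z \<partial>N) \<le> ennreal (U (t\<^sup>2) + (a (1 / \<sigma>) - EW) * (t\<^sup>2 - 1))
        \<and> 0 \<le> U (t\<^sup>2) + (a (1 / \<sigma>) - EW) * (t\<^sup>2 - 1)"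
      using T_pos
    proof eventually_elim
      case (elim t)
      have "(\<integral>\<^sup>+z. \<Phi> t z \<partial>N) = (\<integral>\<^sup>+z. ennreal (stein_fun (t\<^sup>2 * (P (1 / (\<sigma> * t)) z * W z))) \<partial>N)"
        using elim by (simp add: \<Phi>)
      then show ?case
        using risk_P[of "t\<^sup>2" "1 / (\<sigma> * t)"] elim
          mixture_gap_bound[where a = a and b = b and w = EW, OF a_mono gap \<open>0 < \<sigma>\<close> elim]
        by (simp add: U_def ennreal_leI algebra_simps)
    qed
  qed (use T_sq T_sets in \<open>simp_all add: T.prob_space\<close>)
  also have "\<dots> = (\<integral>\<^sup>+t. \<integral>\<^sup>+z. \<Psi> t z \<partial>N \<partial>T)"
    using T_pos by (intro nn_integral_cong_AE) (auto elim!: AE_mp simp: \<Psi> risk_W)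
  finally show ?thesis .
qed simp

lemma (in prob_space) distr_pair_eq_pair_measure:
  fixes X :: "'a \<Rightarrow> 'b::topological_space" and Y :: "'a \<Rightarrow> 'c::topological_space"
  assumes [measurable]: "X \<in> borel_measurable M" "Y \<in> borel_measurable M"
    and indep: "\<forall>A \<in> sets (borel :: 'b measure). \<forall>B \<in> sets (borel :: 'c measure).
        measure M ({\<omega>\<in>space M. X \<omega> \<in> A} \<inter> {\<omega>\<in>space M. Y \<omega> \<in> B})
          = measure M {\<omega>\<in>space M. X \<omega> \<in> A} * measure M {\<omega>\<in>space M. Y \<omega> \<in> B}"
  shows "distr M borel X \<Otimes>\<^sub>M distr M borel Y = distr M (borel \<Otimes>\<^sub>M borel) (\<lambda>\<omega>. (X \<omega>, Y \<omega>))"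
proof (rule pair_measure_eqI)
  interpret X: prob_space "distr M borel X"
    by (rule prob_space_distr) simp
  interpret Y: prob_space "distr M borel Y"
    by (rule prob_space_distr) simp
  show "sigma_finite_measure (distr M borel X)" "sigma_finite_measure (distr M borel Y)"
    by (fact X.sigma_finite_measure Y.sigma_finite_measure)+
  show "sets (distr M borel X \<Otimes>\<^sub>M distr M borel Y) = sets (distr M (borel \<Otimes>\<^sub>M borel) (\<lambda>\<omega>. (X \<omega>, Y \<omega>)))"
    unfolding sets_distr by (rule sets_pair_measure_cong) simp_all
next
  fix A B assume "A \<in> sets (distr M borel X)" "B \<in> sets (distr M borel Y)"
  then have [measurable]: "A \<in> sets borel" "B \<in> sets borel"
    by simp_all
  have "emeasure (distr M (borel \<Otimes>\<^sub>M borel) (\<lambda>\<omega>. (X \<omega>, Y \<omega>))) (A \<times> B)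
      = emeasure M ({\<omega>\<in>space M. X \<omega> \<in> A} \<inter> {\<omega>\<in>space M. Y \<omega> \<in> B})"
    by (subst emeasure_distr) (auto intro!: arg_cong2[where f = emeasure])
  moreover have "emeasure (distr M borel X) A = emeasure M {\<omega>\<in>space M. X \<omega> \<in> A}"
    by (subst emeasure_distr) (auto simp: vimage_def Int_def conj_commute)
  moreover have "emeasure (distr M borel Y) B = emeasure M {\<omega>\<in>space M. Y \<omega> \<in> B}"
    by (subst emeasure_distr) (auto simp: vimage_def Int_def conj_commute)
  ultimately show "emeasure (distr M borel X) A * emeasure (distr M borel Y) B
      = emeasure (distr M (borel \<Otimes>\<^sub>M borel) (\<lambda>\<omega>. (X \<omega>, Y \<omega>))) (A \<times> B)"
    using indep by (simp add: emeasure_eq_measure ennreal_mult[symmetric])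
qed

lemma (in prob_space) nn_integral_scale_mixture:
  fixes \<tau> :: "'a \<Rightarrow> real" and Z :: "'a \<Rightarrow> 'v::euclidean_space"
  assumes [measurable]: "\<tau> \<in> borel_measurable M" "Z \<in> borel_measurable M"
    and indep: "\<forall>A \<in> sets (borel :: real measure). \<forall>B \<in> sets (borel :: 'v measure).
        measure M ({\<omega>\<in>space M. \<tau> \<omega> \<in> A} \<inter> {\<omega>\<in>space M. Z \<omega> \<in> B})
          = measure M {\<omega>\<in>space M. \<tau> \<omega> \<in> A} * measure M {\<omega>\<in>space M. Z \<omega> \<in> B}"
    and [measurable]: "h \<in> borel_measurable borel"
  shows "(\<integral>\<^sup>+e. h e \<partial>distr M borel (\<lambda>\<omega>. \<tau> \<omega> *\<^sub>R Z \<omega>))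
      = (\<integral>\<^sup>+t. \<integral>\<^sup>+z. h (t *\<^sub>R z) \<partial>distr M borel Z \<partial>distr M borel \<tau>)"
proof -
  interpret Z: prob_space "distr M borel Z"
    by (rule prob_space_distr) simp
  have "(\<integral>\<^sup>+e. h e \<partial>distr M borel (\<lambda>\<omega>. \<tau> \<omega> *\<^sub>R Z \<omega>)) = (\<integral>\<^sup>+\<omega>. h (\<tau> \<omega> *\<^sub>R Z \<omega>) \<partial>M)"
    by (subst nn_integral_distr) auto
  also have "\<dots> = (\<integral>\<^sup>+x. h (fst x *\<^sub>R snd x) \<partial>distr M (borel \<Otimes>\<^sub>M borel) (\<lambda>\<omega>. (\<tau> \<omega>, Z \<omega>)))"
    by (subst nn_integral_distr) auto
  also have "\<dots> = (\<integral>\<^sup>+x. h (fst x *\<^sub>R snd x) \<partial>(distr M borel \<tau> \<Otimes>\<^sub>M distr M borel Z))"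
    by (simp only: distr_pair_eq_pair_measure[OF _ _ indep] assms)
  also have "\<dots> = (\<integral>\<^sup>+t. \<integral>\<^sup>+z. h (t *\<^sub>R z) \<partial>distr M borel Z \<partial>distr M borel \<tau>)"
    by (subst Z.nn_integral_fst[symmetric]) auto
  finally show ?thesis .
qed

lemma borel_measurable_std_normal_dens[measurable]: "std_normal_dens \<in> borel_measurable borel"
  unfolding std_normal_dens_def by measurable

lemma sets_std_normal_n[measurable_cong]: "sets std_normal_n = sets borel"
  by (simp add: std_normal_n_def)

locale shrinkage_design = regression_design X for X :: "real^'p^'n" +
  fixes \<phi> :: "real \<Rightarrow> real"
  assumes dims: "CARD('n) > CARD('p) + 1"
    and phi_pos: "\<forall>r\<in>{0..1}. \<phi> r > 0"
    and phi_mono: "mono_on {0..1} \<phi>"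
begin

lemma phi_Rsq_le: "Rsq X u \<le> Rsq X v \<Longrightarrow> \<phi> (Rsq X u) \<le> \<phi> (Rsq X v)"
  using Rsq_bounds by (intro mono_onD[OF phi_mono]) auto

lemma borel_measurable_phi_Rsq[measurable]: "(\<lambda>v. \<phi> (Rsq X v)) \<in> borel_measurable borel"
proof -
  \<comment> \<open>\<open>\<phi>\<close> is only monotone on \<open>[0, 1]\<close>; clamping extends it monotonically to \<open>\<real>\<close>.\<close>
  define \<phi>' where "\<phi>' x = \<phi> (max 0 (min 1 x))" for x
  have "mono \<phi>'"
    unfolding mono_def \<phi>'_def by (intro allI impI mono_onD[OF phi_mono]) auto
  then have [measurable]: "\<phi>' \<in> borel_measurable borel"
    by (rule borel_measurable_mono)
  have "\<phi> (Rsq X v) = \<phi>' (Rsq X v)" for v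
    using Rsq_bounds[of v] by (simp add: \<phi>'_def min_absorb2 max_absorb2)
  then show ?thesis
    by simp
qed

lemma borel_measurable_delta_phi[measurable]: "delta_phi \<phi> X \<in> borel_measurable borel"
  unfolding delta_phi_def[abs_def] by measurable

lemma borel_measurable_delta_U[measurable]: "delta_U X \<in> borel_measurable borel"
  unfolding delta_U_def[abs_def] by measurable

lemma delta_phi_nonneg: "0 \<le> delta_phi \<phi> X v"
proof -
  have "0 < \<phi> (Rsq X v)"
    using phi_pos Rsq_bounds[of v] by blast
  then show ?thesis
    using RSS_nonneg[of v] dims by (simp add: delta_phi_def)
qed

lemma AE_delta_U_pos: "AE z in std_normal_n. 0 < delta_U X z"
proof -
  have "AE z in lborel. 0 < delta_U X z"
    using AE_RSS_pos[OF dims] by eventually_elim (use dims in \<open>simp add: delta_U_def\<close>)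
  then show ?thesis
    unfolding std_normal_n_def by (subst AE_density) (auto elim!: AE_mp simp: std_normal_dens_def)
qed

definition shrink :: "real^'p \<Rightarrow> real \<Rightarrow> real^'n \<Rightarrow> real" where
  "shrink b c z = \<phi> (Rsq X (c *\<^sub>R (X *v b) + z))"

lemma borel_measurable_shrink[measurable]: "shrink b c \<in> borel_measurable borel"
  unfolding shrink_def[abs_def] by measurable

lemma shrink_bounds: "\<phi> 0 \<le> shrink b c z" "shrink b c z \<le> \<phi> 1"
  using Rsq_bounds by (auto simp: shrink_def intro!: mono_onD[OF phi_mono])

lemma shrink_mult_delta_U: "shrink b c z * delta_U X z = delta_phi \<phi> X (c *\<^sub>R (X *v b) + z)"
  using RSS_add_range[of z "c *\<^sub>R b"]
  by (simp add: shrink_def delta_phi_def delta_U_def matrix_vector_mult_scaleR add.commute)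

lemma stein_loss_delta_phi_model:
  assumes "\<sigma> \<noteq> 0" "t \<noteq> 0"
  shows "stein_loss (delta_phi \<phi> X (a *\<^sub>R ones + X *v b + (\<sigma> * t) *\<^sub>R z)) (\<sigma>\<^sup>2)
      = stein_fun (t\<^sup>2 * (shrink b (1 / (\<sigma> * t)) z * delta_U X z))"
  using assms
  by (simp add: delta_phi_def delta_U_def shrink_def Rsq_model RSS_model stein_loss_eq_stein_fun
      power_mult_distrib mult_ac)

lemma stein_loss_delta_U_model:
  assumes "\<sigma> \<noteq> 0" "t \<noteq> 0"
  shows "stein_loss (delta_U X (a *\<^sub>R ones + X *v b + (\<sigma> * t) *\<^sub>R z)) (\<sigma>\<^sup>2)
      = stein_fun (t\<^sup>2 * delta_U X z)"
  using assms by (simp add: delta_U_def RSS_model stein_loss_eq_stein_fun power_mult_distrib)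

lemma delta_phi_reflect:
  assumes "0 \<le> l" and "(X *v b) \<bullet> v \<le> (X *v b) \<bullet> (l *\<^sub>R (X *v b) - v)"
  shows "delta_phi \<phi> X v \<le> delta_phi \<phi> X (l *\<^sub>R (X *v b) - v)"
proof -
  let ?\<mu> = "X *v b" and ?v' = "l *\<^sub>R (X *v b) - v"
  have RSS_reflect: "RSS X ?v' = RSS X v"
    using RSS_add_range[of "-v" "l *\<^sub>R b"] RSS_scaleR[of "-1" v]
    by (simp add: matrix_vector_mult_scaleR)
  have "hat X *v ?v' = l *\<^sub>R ?\<mu> - hat X *v v"
    by (simp only: matrix_vector_mult_diff_distrib matrix_vector_mult_scaleR hat_range)
  have "(norm (hat X *v ?v'))\<^sup>2
      = l\<^sup>2 * (?\<mu> \<bullet> ?\<mu>) - 2 * l * (?\<mu> \<bullet> (hat X *v v)) + (norm (hat X *v v))\<^sup>2"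
    unfolding \<open>hat X *v ?v' = l *\<^sub>R ?\<mu> - hat X *v v\<close> power2_norm_eq_inner
    by (simp add: inner_commute power2_eq_square algebra_simps)
  moreover have "?\<mu> \<bullet> ?v' = l * (?\<mu> \<bullet> ?\<mu>) - ?\<mu> \<bullet> v"
    by (simp add: inner_diff_right)
  ultimately have "(norm (hat X *v ?v'))\<^sup>2 - (norm (hat X *v v))\<^sup>2 = l * (?\<mu> \<bullet> ?v' - ?\<mu> \<bullet> v)"
    by (simp add: inner_range_hat power2_eq_square algebra_simps)
  moreover have "0 \<le> l * (?\<mu> \<bullet> ?v' - ?\<mu> \<bullet> v)"
    using assms by simp
  ultimately have hat_le: "(norm (hat X *v v))\<^sup>2 \<le> (norm (hat X *v ?v'))\<^sup>2"
    by linarith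
  show ?thesis
  proof (cases "RSS X v = 0")
    case False
    then have "Rsq X v \<le> Rsq X ?v'"
      using RSS_reflect RSS_nonneg[of v] hat_le by (intro Rsq_mono) simp_all
    then show ?thesis
      using RSS_reflect RSS_nonneg[of v] dims
      by (simp add: delta_phi_def divide_right_mono mult_right_mono phi_Rsq_le)
  qed (simp add: delta_phi_def RSS_reflect)
qed

lemma nn_integral_shrink_mono:
  assumes "0 \<le> c\<^sub>1" "c\<^sub>1 \<le> c\<^sub>2"
  shows "(\<integral>\<^sup>+z. ennreal (shrink b c\<^sub>1 z * delta_U X z) \<partial>std_normal_n)
      \<le> (\<integral>\<^sup>+z. ennreal (shrink b c\<^sub>2 z * delta_U X z) \<partial>std_normal_n)"
proof -
  define f where "f r = (2 * pi) powr (- real CARD('n) / 2) * exp (- r\<^sup>2 / 2)" for r :: real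
  have normal_mean: "(\<integral>\<^sup>+z. ennreal (shrink b c z * delta_U X z) \<partial>std_normal_n)
      = (\<integral>\<^sup>+z. ennreal (f (norm z)) * ennreal (delta_phi \<phi> X (c *\<^sub>R (X *v b) + z)) \<partial>lborel)" for c
    unfolding std_normal_n_def
    by (subst nn_integral_density) (simp_all add: shrink_mult_delta_U std_normal_dens_def f_def)
  have "f s \<le> f r" if "0 \<le> r" "r \<le> s" for r s
    using that by (simp add: f_def power_mono)
  then show ?thesis
    unfolding normal_mean using assms
    by (intro nn_integral_radial_shift_mono delta_phi_reflect delta_phi_nonneg)
      (simp_all add: f_def)
qed

lemma normal_improvement_stein_fun:
  assumes improves: "\<forall>\<alpha> \<beta> \<sigma>. \<sigma> > 0 \<longrightarrow>
      risk std_normal_n (delta_phi \<phi> X) X \<alpha> \<beta> \<sigma> \<le> risk std_normal_n (delta_U X) X \<alpha> \<beta> \<sigma>"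
    and "0 < c"
  shows "(\<integral>\<^sup>+z. ennreal (stein_fun (shrink b c z * delta_U X z)) \<partial>std_normal_n)
      \<le> (\<integral>\<^sup>+z. ennreal (stein_fun (delta_U X z)) \<partial>std_normal_n)"
  using improves[rule_format, of "1 / c" 0 b] \<open>0 < c\<close>
    stein_loss_delta_phi_model[of "1 / c" 1 0 b] stein_loss_delta_U_model[of "1 / c" 1 0 b]
  by (simp add: risk_def)

end

theorem theorem3p1:
  fixes X :: "real^'p^'n" and \<phi> :: "real \<Rightarrow> real"
  assumes dims: "CARD('n) > CARD('p) + 1"
    and centered_cols: "\<forall>j. (\<Sum>i\<in>UNIV. X $ i $ j) = 0"
    and full_rank: "rank X = CARD('p)"
    and phi_pos: "\<forall>r\<in>{0..1}. \<phi> r > 0"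
    and phi_mono: "mono_on {0..1} \<phi>"
    and improves_normal: "\<forall>\<alpha> \<beta> \<sigma>. \<sigma> > 0 \<longrightarrow>
        risk std_normal_n (delta_phi \<phi> X) X \<alpha> \<beta> \<sigma> \<le> risk std_normal_n (delta_U X) X \<alpha> \<beta> \<sigma>"
    and M: "prob_space M"
    and tau_meas: "(\<tau> :: 'a \<Rightarrow> real) \<in> borel_measurable M"
    and Z_normal: "distributed M lborel (Z :: 'a \<Rightarrow> real^'n) std_normal_dens"
    and indep: "\<forall>A \<in> sets (borel :: real measure). \<forall>B \<in> sets (borel :: (real^'n) measure).
        measure M ({\<omega>\<in>space M. \<tau> \<omega> \<in> A} \<inter> {\<omega>\<in>space M. Z \<omega> \<in> B})
          = measure M {\<omega>\<in>space M. \<tau> \<omega> \<in> A} * measure M {\<omega>\<in>space M. Z \<omega> \<in> B}"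
    and tau_pos: "AE \<omega> in M. \<tau> \<omega> > 0"
    and tau_sq: "integrable M (\<lambda>\<omega>. (\<tau> \<omega>)\<^sup>2)" "(\<integral>\<omega>. (\<tau> \<omega>)\<^sup>2 \<partial>M) = 1"
  shows "\<forall>\<alpha> \<beta> \<sigma>. \<sigma> > 0 \<longrightarrow>
        risk (distr M borel (\<lambda>\<omega>. \<tau> \<omega> *\<^sub>R Z \<omega>)) (delta_phi \<phi> X) X \<alpha> \<beta> \<sigma>
          \<le> risk (distr M borel (\<lambda>\<omega>. \<tau> \<omega> *\<^sub>R Z \<omega>)) (delta_U X) X \<alpha> \<beta> \<sigma>"
proof (intro allI impI)
  fix \<alpha> :: real and \<beta> :: "real^'p" and \<sigma> :: real
  assume "0 < \<sigma>"
  interpret shrinkage_design X \<phi>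
    using centered_cols full_rank dims phi_pos phi_mono by unfold_locales
  interpret M: prob_space M
    by (fact M)
  let ?Y = "distr M borel (\<lambda>\<omega>. \<tau> \<omega> *\<^sub>R Z \<omega>)"
  have [measurable]: "\<tau> \<in> borel_measurable M" "Z \<in> borel_measurable M"
    using tau_meas Z_normal by (auto simp: distributed_def)
  have Z_law: "distr M borel Z = std_normal_n"
    using Z_normal by (simp add: distributed_def std_normal_n_def cong: distr_cong)
  have mixture: "risk ?Y \<delta> X \<alpha> \<beta> \<sigma>
      = (\<integral>\<^sup>+t. \<integral>\<^sup>+z. ennreal (stein_loss (\<delta> (\<alpha> *\<^sub>R ones + X *v \<beta> + (\<sigma> * t) *\<^sub>R z)) (\<sigma>\<^sup>2))
          \<partial>std_normal_n \<partial>distr M borel \<tau>)"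
    if [measurable]: "\<delta> \<in> borel_measurable borel" for \<delta>
    unfolding risk_def Z_law[symmetric]
    by (subst M.nn_integral_scale_mixture[OF _ _ indep]) (simp_all add: stein_loss_def)
  show "risk ?Y (delta_phi \<phi> X) X \<alpha> \<beta> \<sigma> \<le> risk ?Y (delta_U X) X \<alpha> \<beta> \<sigma>"
    unfolding mixture[OF borel_measurable_delta_phi] mixture[OF borel_measurable_delta_U]
  proof (rule stein_risk_scale_mixture_le[where P = "shrink \<beta>" and p\<^sub>0 = "\<phi> 0" and p\<^sub>1 = "\<phi> 1"])
    show "prob_space (std_normal_n :: (real^'n) measure)"
      using M.prob_space_distr[of Z borel] Z_law by simp
    show "AE t in distr M borel \<tau>. 0 < t"
      using tau_pos by (simp add: AE_distr_iff)
    show "integrable (distr M borel \<tau>) (\<lambda>t. t\<^sup>2)" "(\<integral>t. t\<^sup>2 \<partial>distr M borel \<tau>) = 1"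
      using tau_sq by (simp_all add: integrable_distr_eq integral_distr)
    show "0 < \<phi> 0"
      using phi_pos by simp
    show "ennreal (stein_loss (delta_phi \<phi> X (\<alpha> *\<^sub>R ones + X *v \<beta> + (\<sigma> * t) *\<^sub>R z)) (\<sigma>\<^sup>2))
        = ennreal (stein_fun (t\<^sup>2 * (shrink \<beta> (1 / (\<sigma> * t)) z * delta_U X z)))"
      "ennreal (stein_loss (delta_U X (\<alpha> *\<^sub>R ones + X *v \<beta> + (\<sigma> * t) *\<^sub>R z)) (\<sigma>\<^sup>2))
        = ennreal (stein_fun (t\<^sup>2 * delta_U X z))" if "0 < t" for t z
      using \<open>0 < \<sigma>\<close> that by (simp_all add: stein_loss_delta_phi_model stein_loss_delta_U_model)
  qed (simp_all add: M.prob_space_distr AE_delta_U_pos shrink_bounds nn_integral_shrink_mono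
      normal_improvement_stein_fun[OF improves_normal] \<open>0 < \<sigma>\<close>)
qed

end
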